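(* Every strong Euler–Gauss sequence is a Gauss sequence.
   Context: $\mu$ is the Möbius function. For an integer sequence $(a_n)$ and $n\ge1$, $A_n^+=\prod_{d\mid n,\ \mu(d)=1} a_{n/d}$ and $A_n^-=\prod_{d\mid n,\ \mu(d)=-1} a_{n/d}$ (empty products equal $1$). An integer sequence is a strong Euler–Gauss sequence if for all $n\ge1$, $\left(\frac{A_n^-}{\gcd(A_n^+,A_n^-)}\right)^{-1}\equiv\left(\frac{A_n^+}{\gcd(A_n^+,A_n^-)}\right)^{-1}\pmod n$, where $x^{-1}$ denotes the inverse of $x$ modulo $n$ (so the two quotients are required to be invertible modulo $n$). A Gauss sequence is an integer sequence with $\sum_{d\mid n}\mu(d)a_{n/d}\equiv0\pmod n$ for all $n\ge1$. *)

theory Defs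
  imports "HOL-Number_Theory.Number_Theory" "HOL-Computational_Algebra.Squarefree"
begin

definition moebius_mu :: "nat \<Rightarrow> int" where
  "moebius_mu d = (if squarefree d then (-1) ^ card (prime_factors d) else 0)"

definition A_plus :: "(nat \<Rightarrow> int) \<Rightarrow> nat \<Rightarrow> int" where
  "A_plus a n = (\<Prod>d\<in>{d. d dvd n \<and> moebius_mu d = 1}. a (n div d))"

definition A_minus :: "(nat \<Rightarrow> int) \<Rightarrow> nat \<Rightarrow> int" where
  "A_minus a n = (\<Prod>d\<in>{d. d dvd n \<and> moebius_mu d = -1}. a (n div d))"

text \<open>Inverse of x modulo n (meaningful when x is coprime to n).\<close>
definition inv_mod :: "nat \<Rightarrow> int \<Rightarrow> int" where
  "inv_mod n x = (SOME y. [x * y = 1] (mod int n))"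

definition strong_euler_gauss :: "(nat \<Rightarrow> int) \<Rightarrow> bool" where
  "strong_euler_gauss a \<longleftrightarrow>
    (\<forall>n\<ge>1. let g = gcd (A_plus a n) (A_minus a n);
               P = A_plus a n div g; M = A_minus a n div g in
      coprime P (int n) \<and> coprime M (int n) \<and>
      [inv_mod n M = inv_mod n P] (mod int n))"

definition gauss_sequence :: "(nat \<Rightarrow> int) \<Rightarrow> bool" where
  "gauss_sequence a \<longleftrightarrow>
    (\<forall>n\<ge>1. [(\<Sum>d | d dvd n. moebius_mu d * a (n div d)) = 0] (mod int n))"

end

theory Submission
  imports Defs
begin

text \<open>Fix a prime power \<open>p^k\<close> dividing \<open>n\<close>, and call two nonzero integers equivalent if they
  have the same \<open>p\<close>-adic valuation and their \<open>p\<close>-free parts agree modulo \<open>p^k\<close>. This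
  relation is multiplicative and cancellative, and the strong Euler--Gauss condition at \<open>n\<close>
  implies that \<open>A\<^sup>+\<^sub>n\<close> and \<open>A\<^sup>-\<^sub>n\<close> are equivalent. Adjoining or removing the factor \<open>p\<close> is a bijection
  between the divisors \<open>d\<close> of \<open>n\<close> with \<open>\<mu>(d) = 1\<close> and those with \<open>\<mu>(d) = -1\<close>; except for
  the pair \<open>(1, p)\<close>, it pairs \<open>a\<^sub>N\<close> with \<open>a\<^bsub>N/p\<^esub>\<close> for a proper divisor \<open>N\<close> of \<open>n\<close> that is still
  divisible by \<open>p^k\<close>. Strong induction and cancellation therefore show that \<open>a\<^sub>n\<close> is equivalent
  to \<open>a\<^bsub>n/p\<^esub>\<close>, so every pair contributes a multiple of \<open>p^k\<close> to the Moebius sum. As this holds for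
  every prime power dividing \<open>n\<close>, \<open>n\<close> divides the sum.\<close>

definition unit_part_cong :: "nat \<Rightarrow> nat \<Rightarrow> int \<Rightarrow> int \<Rightarrow> bool" where
  "unit_part_cong p k x y \<longleftrightarrow> (\<exists>v U W. x = int p ^ v * U \<and> y = int p ^ v * W \<and>
     \<not> int p dvd U \<and> \<not> int p dvd W \<and> [U = W] (mod int p ^ k))"

lemma prime_power_mult_eqD:
  assumes "prime p" "int p ^ a * A = int p ^ b * B" "\<not> int p dvd A" "\<not> int p dvd B"
  shows "a = b \<and> A = B"
proof -
  have p0: "int p \<noteq> 0"
    using assms(1) by auto
  have "a = multiplicity (int p) (int p ^ a * A)"
    using assms(3) p0 by (simp add: multiplicity_decomposeI)
  also have "\<dots> = b"
    using assms(2,4) p0 by (simp add: multiplicity_decomposeI)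
  finally show ?thesis
    using assms(2) p0 by simp
qed

lemma prime_not_dvd_mult:
  assumes "prime p" "\<not> int p dvd U" "\<not> int p dvd W"
  shows "\<not> int p dvd U * W"
  using assms by (simp add: prime_dvd_mult_iff)

lemma unit_part_congI:
  "\<not> int p dvd U \<Longrightarrow> \<not> int p dvd W \<Longrightarrow> [U = W] (mod int p ^ k) \<Longrightarrow> unit_part_cong p k U W"
  unfolding unit_part_cong_def by (rule exI[of _ 0], rule exI[of _ U], rule exI[of _ W]) simp

lemma unit_part_cong_refl:
  assumes "prime p" "x \<noteq> 0"
  shows "unit_part_cong p k x x"
proof -
  have "\<not> is_unit (int p)"
    using prime_gt_1_nat[OF assms(1)] by simp
  then obtain U where "x = int p ^ multiplicity (int p) x * U" "\<not> int p dvd U"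
    using multiplicity_decompose'[OF assms(2)] by blast
  then show ?thesis
    unfolding unit_part_cong_def by (blast intro: cong_refl)
qed

lemma unit_part_cong_sym: "unit_part_cong p k x y \<Longrightarrow> unit_part_cong p k y x"
  unfolding unit_part_cong_def using cong_sym by blast

lemma unit_part_cong_mult:
  assumes "prime p" "unit_part_cong p k x y" "unit_part_cong p k x' y'"
  shows "unit_part_cong p k (x * x') (y * y')"
proof -
  obtain v U W where "x = int p ^ v * U" "y = int p ^ v * W" "\<not> int p dvd U" "\<not> int p dvd W"
      "[U = W] (mod int p ^ k)"
    using assms(2) unfolding unit_part_cong_def by blast
  moreover obtain v' U' W' where "x' = int p ^ v' * U'" "y' = int p ^ v' * W'"
      "\<not> int p dvd U'" "\<not> int p dvd W'" "[U' = W'] (mod int p ^ k)"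
    using assms(3) unfolding unit_part_cong_def by blast
  ultimately show ?thesis
    unfolding unit_part_cong_def using prime_not_dvd_mult[OF assms(1)] cong_mult
    by (intro exI[of _ "v + v'"] exI[of _ "U * U'"] exI[of _ "W * W'"])
      (auto simp: power_add algebra_simps)
qed

lemma unit_part_cong_prod:
  assumes "prime p" "\<And>d. d \<in> S \<Longrightarrow> unit_part_cong p k (f d) (g d)"
  shows "unit_part_cong p k (\<Prod>d\<in>S. f d) (\<Prod>d\<in>S. g d)"
proof (cases "finite S")
  case True
  then show ?thesis
    using assms(2)
    by (induction S rule: finite_induct)
      (simp_all add: unit_part_cong_refl unit_part_cong_mult assms(1))
next
  case False
  then show ?thesis
    using unit_part_cong_refl[OF assms(1)] by simp
qed

lemma unit_part_cong_cancel:
  assumes "prime p" "unit_part_cong p k (x * r) (y * s)" "unit_part_cong p k r s"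
  shows "unit_part_cong p k x y"
proof -
  obtain v U W where xr: "x * r = int p ^ v * U" "y * s = int p ^ v * W"
      "\<not> int p dvd U" "\<not> int p dvd W" "[U = W] (mod int p ^ k)"
    using assms(2) unfolding unit_part_cong_def by blast
  obtain w U' W' where r: "r = int p ^ w * U'" "s = int p ^ w * W'"
      "\<not> int p dvd U'" "\<not> int p dvd W'" "[U' = W'] (mod int p ^ k)"
    using assms(3) unfolding unit_part_cong_def by blast
  have "x \<noteq> 0" "y \<noteq> 0"
    using xr(1-4) assms(1) by auto
  obtain e X where x: "x = int p ^ e * X" "\<not> int p dvd X"
    using unit_part_cong_refl[OF assms(1) \<open>x \<noteq> 0\<close>] unfolding unit_part_cong_def by blast
  obtain f Y where y: "y = int p ^ f * Y" "\<not> int p dvd Y"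
    using unit_part_cong_refl[OF assms(1) \<open>y \<noteq> 0\<close>] unfolding unit_part_cong_def by blast
  have "int p ^ (e + w) * (X * U') = int p ^ v * U"
    using xr(1) x r(1) by (simp add: power_add algebra_simps)
  then have ex: "e + w = v" "X * U' = U"
    using prime_power_mult_eqD[OF assms(1)] xr(3) prime_not_dvd_mult[OF assms(1) x(2) r(3)]
    by blast+
  have "int p ^ (f + w) * (Y * W') = int p ^ v * W"
    using xr(2) y r(2) by (simp add: power_add algebra_simps)
  then have fy: "f + w = v" "Y * W' = W"
    using prime_power_mult_eqD[OF assms(1)] xr(4) prime_not_dvd_mult[OF assms(1) y(2) r(4)]
    by blast+
  have "[X * U' = Y * W'] (mod int p ^ k)"
    using ex fy xr(5) by simp
  also have "[Y * W' = Y * U'] (mod int p ^ k)"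
    using r(5) by (simp add: cong_scalar_left cong_sym)
  finally have "[X * U' = Y * U'] (mod int p ^ k)" .
  moreover have "coprime U' (int p ^ k)"
    using prime_imp_coprime[of "int p" U'] r(3) assms(1) by (simp add: coprime_commute)
  ultimately have "[X = Y] (mod int p ^ k)"
    by (simp add: cong_mult_rcancel)
  then show ?thesis
    unfolding unit_part_cong_def using x y ex(1) fy(1) by force
qed

lemma unit_part_cong_imp_dvd_diff:
  assumes "unit_part_cong p k x y"
  shows "int p ^ k dvd x - y"
proof -
  obtain v U W where "x = int p ^ v * U" "y = int p ^ v * W" "[U = W] (mod int p ^ k)"
    using assms unfolding unit_part_cong_def by blast
  then show ?thesis
    by (metis cong_iff_dvd_diff cong_scalar_left)
qed

lemma moebius_mu_1: "moebius_mu 1 = 1"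
  by (simp add: moebius_mu_def)

lemma moebius_mu_prime: "prime p \<Longrightarrow> moebius_mu p = -1"
  by (simp add: moebius_mu_def squarefree_prime prime_prime_factors)

lemma moebius_mu_cases: "moebius_mu d = 0 \<or> moebius_mu d = 1 \<or> moebius_mu d = -1"
  unfolding moebius_mu_def
  by (cases "even (card (prime_factors d))") (simp_all add: neg_one_even_power neg_one_odd_power)

lemma squarefree_if_moebius_mu_nonzero: "moebius_mu d \<noteq> 0 \<Longrightarrow> squarefree d"
  by (auto simp: moebius_mu_def split: if_splits)

lemma moebius_mu_mult_prime:
  assumes "prime p" "\<not> p dvd e" "squarefree e"
  shows "squarefree (e * p)" "moebius_mu (e * p) = - moebius_mu e"
proof -
  have "coprime e p"
    using prime_imp_coprime[OF assms(1,2)] by (simp add: coprime_commute)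
  then show sq: "squarefree (e * p)"
    using squarefree_mult_coprime assms(1,3) squarefree_prime by blast
  have "e \<noteq> 0"
    using assms(3) by (metis not_squarefree_0)
  then have "prime_factors (e * p) = insert p (prime_factors e)"
    using assms(1) by (simp add: prime_factors_product prime_prime_factors)
  moreover have "p \<notin> prime_factors e"
    using assms(2) by (auto simp: in_prime_factors_iff)
  ultimately show "moebius_mu (e * p) = - moebius_mu e"
    using sq assms(3) by (simp add: moebius_mu_def)
qed

definition toggle_prime :: "nat \<Rightarrow> nat \<Rightarrow> nat" where
  "toggle_prime p d = (if p dvd d then d div p else d * p)"

lemma squarefree_toggle_prime_cases:
  assumes "prime p" "squarefree d"
  obtains e where "\<not> p dvd e" "squarefree e" "d = e" "toggle_prime p d = e * p"
    | e where "\<not> p dvd e" "squarefree e" "d = e * p" "toggle_prime p d = e"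
proof (cases "p dvd d")
  case True
  then obtain e where d: "d = e * p"
    by (metis dvd_div_mult_self)
  have "\<not> p dvd e"
  proof
    assume "p dvd e"
    then have "p ^ 2 dvd d"
      using d by (simp add: power2_eq_square)
    then show False
      using assms unfolding squarefree_def by (auto simp: prime_gt_1_nat)
  qed
  moreover have "squarefree e"
    using assms(2) d squarefree_multD by blast
  moreover have "toggle_prime p d = e"
    using d assms(1) by (simp add: toggle_prime_def prime_gt_0_nat)
  ultimately show thesis
    using that(2) d by blast
next
  case False
  then show thesis
    using that(1) assms(2) by (simp add: toggle_prime_def)
qed

lemma toggle_prime_divisor:
  assumes "prime p" "p dvd n" "d dvd n" "squarefree d"
  shows "toggle_prime p d dvd n \<and> moebius_mu (toggle_prime p d) = - moebius_mu d
    \<and> toggle_prime p (toggle_prime p d) = d"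
proof (cases rule: squarefree_toggle_prime_cases[OF assms(1,4)])
  case (1 e)
  then have "coprime e p"
    using prime_imp_coprime[OF assms(1)] by (simp add: coprime_commute)
  then show ?thesis
    using 1 assms moebius_mu_mult_prime[of p e]
    by (simp add: divides_mult toggle_prime_def prime_gt_0_nat)
next
  case (2 e)
  then show ?thesis
    using assms moebius_mu_mult_prime[of p e] by (auto simp: toggle_prime_def dvd_mult_left)
qed

lemma toggle_prime_bij:
  assumes "prime p" "p dvd n"
  shows "bij_betw (toggle_prime p) {d. d dvd n \<and> moebius_mu d = 1} {d. d dvd n \<and> moebius_mu d = -1}"
proof (rule bij_betw_byWitness[where f' = "toggle_prime p"])
  note toggle = toggle_prime_divisor[OF assms _ squarefree_if_moebius_mu_nonzero]
  show "\<forall>d\<in>{d. d dvd n \<and> moebius_mu d = 1}. toggle_prime p (toggle_prime p d) = d"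
    "\<forall>d\<in>{d. d dvd n \<and> moebius_mu d = -1}. toggle_prime p (toggle_prime p d) = d"
    "toggle_prime p ` {d. d dvd n \<and> moebius_mu d = 1} \<subseteq> {d. d dvd n \<and> moebius_mu d = -1}"
    "toggle_prime p ` {d. d dvd n \<and> moebius_mu d = -1} \<subseteq> {d. d dvd n \<and> moebius_mu d = 1}"
    using toggle by force+
qed

lemma toggle_prime_quotients:
  assumes "prime p" "p ^ k dvd n" "n > 0" "d dvd n" "squarefree d"
  obtains N where "0 < N" "p ^ k dvd N" "d \<noteq> 1 \<Longrightarrow> d \<noteq> p \<Longrightarrow> N < n"
    "(n div d = N \<and> n div toggle_prime p d = N div p) \<or>
     (n div d = N div p \<and> n div toggle_prime p d = N)"
proof -
  obtain e where e: "\<not> p dvd e" "d = e \<or> d = e * p"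
    "{n div d, n div toggle_prime p d} = {n div e, n div e div p}"
    by (rule squarefree_toggle_prime_cases[OF assms(1,5)]) (auto simp: div_mult2_eq)
  have "e dvd n"
    using e(2) assms(4) by (auto intro: dvd_mult_left)
  then have n: "n = e * (n div e)"
    by simp
  have "coprime (p ^ k) e"
    using prime_imp_coprime[OF assms(1) e(1)] by simp
  then have "p ^ k dvd n div e"
    using assms(2) n by (metis coprime_dvd_mult_right_iff)
  moreover have "0 < n div e"
    using n assms(3) by (metis gr0I mult_0_right)
  moreover have "n div e < n" if "d \<noteq> 1" "d \<noteq> p"
  proof -
    have "1 < e"
      using that e(2) n assms(3) by (cases e) auto
    then show ?thesis
      using assms(3) by simp
  qed
  ultimately show thesis
    using that e(3) by (auto simp: doubleton_eq_iff)
qed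

lemma inv_mod_cong:
  assumes "coprime x (int n)"
  shows "[x * inv_mod n x = 1] (mod int n)"
  unfolding inv_mod_def using cong_solve_coprime_int[OF assms] by (rule someI_ex)

lemma cong_if_inv_mod_cong:
  assumes "coprime P (int n)" "coprime M (int n)" "[inv_mod n M = inv_mod n P] (mod int n)"
  shows "[M = P] (mod int n)"
proof -
  have "[M = M * (P * inv_mod n P)] (mod int n)"
    using cong_scalar_left[OF inv_mod_cong[OF assms(1)], of M] by (simp add: cong_sym)
  also have "[M * (P * inv_mod n P) = P * (M * inv_mod n M)] (mod int n)"
    using cong_scalar_left[OF cong_sym[OF assms(3)], of "M * P"] by (simp add: ac_simps)
  also have "[P * (M * inv_mod n M) = P] (mod int n)"
    using cong_scalar_left[OF inv_mod_cong[OF assms(2)], of P] by simp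
  finally show ?thesis .
qed

lemma unit_part_cong_A_plus_A_minus:
  assumes "strong_euler_gauss a" "prime p" "k \<ge> 1" "p ^ k dvd n" "n > 0"
  shows "unit_part_cong p k (A_plus a n) (A_minus a n)"
proof -
  define g where "g = gcd (A_plus a n) (A_minus a n)"
  define P where "P = A_plus a n div g"
  define M where "M = A_minus a n div g"
  have "int p dvd int n"
    using dvd_trans[OF le_imp_power_dvd[OF assms(3)] assms(4)] by simp
  have "\<not> is_unit (int p)"
    using prime_gt_1_nat[OF assms(2)] by simp
  have PM: "coprime P (int n)" "coprime M (int n)" "[inv_mod n M = inv_mod n P] (mod int n)"
    using assms(1) assms(5) unfolding strong_euler_gauss_def Let_def g_def P_def M_def by auto
  have "\<not> int p dvd P" "\<not> int p dvd M"
    using PM(1,2) \<open>int p dvd int n\<close> \<open>\<not> is_unit (int p)\<close> coprime_common_divisor by blast+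
  moreover have "int p ^ k dvd int n"
    using assms(4) by (metis of_nat_dvd_iff of_nat_power)
  then have "[P = M] (mod int p ^ k)"
    using cong_dvd_modulus[OF cong_if_inv_mod_cong[OF PM]] cong_sym by blast
  ultimately have "unit_part_cong p k P M"
    by (rule unit_part_congI)
  moreover have "g \<noteq> 0"
  proof
    assume "g = 0"
    then have "is_unit (int n)"
      using PM(1) by (simp add: P_def)
    then show False
      using \<open>int p dvd int n\<close> \<open>\<not> is_unit (int p)\<close> by (meson dvd_unit_imp_unit)
  qed
  ultimately have "unit_part_cong p k (g * P) (g * M)"
    using unit_part_cong_mult[OF assms(2) unit_part_cong_refl[OF assms(2)]] by blast
  then show ?thesis
    by (simp add: g_def P_def M_def)
qed

lemma unit_part_cong_a_div_prime:
  assumes "strong_euler_gauss a" "prime p" "k \<ge> 1"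
  shows "0 < n \<Longrightarrow> p ^ k dvd n \<Longrightarrow> unit_part_cong p k (a n) (a (n div p))"
proof (induction n rule: less_induct)
  case (less n)
  define D where "D = {d. d dvd n \<and> moebius_mu d = 1}"
  have "p dvd n"
    using dvd_trans[OF le_imp_power_dvd[OF assms(3)] less.prems(2)] by simp
  have one: "1 \<in> D"
    using moebius_mu_1 by (simp add: D_def)
  have fin: "finite D"
    using less.prems(1) unfolding D_def by (auto intro: finite_subset[OF _ finite_divisors_nat])
  have "unit_part_cong p k (a (n div d)) (a (n div toggle_prime p d))" if "d \<in> D - {1}" for d
  proof -
    have d: "d dvd n" "moebius_mu d = 1" "d \<noteq> 1"
      using that by (auto simp: D_def)
    then have "d \<noteq> p"
      using moebius_mu_prime[OF assms(2)] by auto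
    obtain N where "0 < N" "p ^ k dvd N" "N < n"
      "(n div d = N \<and> n div toggle_prime p d = N div p) \<or>
       (n div d = N div p \<and> n div toggle_prime p d = N)"
      using toggle_prime_quotients[OF assms(2) less.prems(2,1) d(1)] d \<open>d \<noteq> p\<close>
        squarefree_if_moebius_mu_nonzero by (metis zero_neq_one)
    then show ?thesis
      using less.IH unit_part_cong_sym by metis
  qed
  then have rest: "unit_part_cong p k (\<Prod>d\<in>D - {1}. a (n div d))
      (\<Prod>d\<in>D - {1}. a (n div toggle_prime p d))"
    by (rule unit_part_cong_prod[OF assms(2)])
  have "A_plus a n = a n * (\<Prod>d\<in>D - {1}. a (n div d))"
    unfolding A_plus_def D_def[symmetric] using prod.remove[OF fin one, of "\<lambda>d. a (n div d)"]
    by simp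
  moreover have "A_minus a n = a (n div p) * (\<Prod>d\<in>D - {1}. a (n div toggle_prime p d))"
  proof -
    have "A_minus a n = (\<Prod>d\<in>D. a (n div toggle_prime p d))"
      unfolding A_minus_def D_def
      using prod.reindex_bij_betw[OF toggle_prime_bij[OF assms(2) \<open>p dvd n\<close>],
          of "\<lambda>d. a (n div d)"]
      by simp
    moreover have "toggle_prime p 1 = p"
      using prime_gt_1_nat[OF assms(2)] by (simp add: toggle_prime_def)
    ultimately show ?thesis
      using prod.remove[OF fin one, of "\<lambda>d. a (n div toggle_prime p d)"] by simp
  qed
  ultimately show ?case
    using unit_part_cong_A_plus_A_minus[OF assms less.prems(2,1)]
      unit_part_cong_cancel[OF assms(2) _ rest] by simp
qed

lemma moebius_sum_eq_sum_toggle_pairs: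
  fixes f :: "nat \<Rightarrow> int"
  assumes "prime p" "p dvd n" "n > 0"
  shows "(\<Sum>d | d dvd n. moebius_mu d * f (n div d)) =
    (\<Sum>d | d dvd n \<and> moebius_mu d = 1. f (n div d) - f (n div toggle_prime p d))"
proof -
  define Dp where "Dp = {d. d dvd n \<and> moebius_mu d = 1}"
  define Dm where "Dm = {d. d dvd n \<and> moebius_mu d = -1}"
  have fin: "finite {d. d dvd n}"
    using assms(3) by simp
  have "(\<Sum>d | d dvd n. moebius_mu d * f (n div d)) = (\<Sum>d\<in>Dp \<union> Dm. moebius_mu d * f (n div d))"
    by (rule sum.mono_neutral_cong_right) (use fin moebius_mu_cases in \<open>auto simp: Dp_def Dm_def\<close>)
  also have "\<dots> = (\<Sum>d\<in>Dp. f (n div d)) - (\<Sum>d\<in>Dm. f (n div d))"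
    by (subst sum.union_disjoint)
      (use fin in \<open>auto simp: Dp_def Dm_def sum_negf intro: finite_subset\<close>)
  also have "(\<Sum>d\<in>Dm. f (n div d)) = (\<Sum>d\<in>Dp. f (n div toggle_prime p d))"
    using sum.reindex_bij_betw[OF toggle_prime_bij[OF assms(1,2)], of "\<lambda>d. f (n div d)"]
    unfolding Dp_def Dm_def by simp
  finally show ?thesis
    by (simp add: Dp_def sum_subtractf)
qed

lemma prime_power_dvd_moebius_sum:
  assumes "strong_euler_gauss a" "prime p" "p ^ k dvd n" "n > 0"
  shows "int p ^ k dvd (\<Sum>d | d dvd n. moebius_mu d * a (n div d))"
proof (cases "k = 0")
  case False
  then have "k \<ge> 1"
    by simp
  have "int p ^ k dvd a (n div d) - a (n div toggle_prime p d)"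
    if d: "d dvd n" "moebius_mu d = 1" for d
  proof -
    obtain N where "0 < N" "p ^ k dvd N"
      "(n div d = N \<and> n div toggle_prime p d = N div p) \<or>
       (n div d = N div p \<and> n div toggle_prime p d = N)"
      using toggle_prime_quotients[OF assms(2,3,4) d(1)] d(2)
        squarefree_if_moebius_mu_nonzero by (metis zero_neq_one)
    then have "unit_part_cong p k (a (n div d)) (a (n div toggle_prime p d))"
      using unit_part_cong_a_div_prime[OF assms(1,2) \<open>k \<ge> 1\<close>] unit_part_cong_sym by metis
    then show ?thesis
      by (rule unit_part_cong_imp_dvd_diff)
  qed
  moreover have "p dvd n"
    using dvd_trans[OF le_imp_power_dvd[OF \<open>k \<ge> 1\<close>] assms(3)] by simp
  ultimately show ?thesis
    unfolding moebius_sum_eq_sum_toggle_pairs[OF assms(2) \<open>p dvd n\<close> assms(4)]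
    by (auto intro: dvd_sum)
qed simp

lemma int_dvd_if_prime_powers_dvd:
  assumes "n > 0" "\<And>p k. prime p \<Longrightarrow> p ^ k dvd n \<Longrightarrow> int p ^ k dvd m"
  shows "int n dvd m"
proof (cases "m = 0")
  case False
  show ?thesis
  proof (rule multiplicity_le_imp_dvd)
    show "int n \<noteq> 0"
      using assms(1) by simp
    fix q :: int
    assume "prime q"
    then have q: "q = int (nat q)" "prime (nat q)"
      by (auto simp: prime_ge_0_int prime_nat_iff_prime)
    have "q ^ multiplicity q (int n) dvd int n"
      by (rule multiplicity_dvd)
    then have "nat q ^ multiplicity q (int n) dvd n"
      using q(1) by (metis of_nat_dvd_iff of_nat_power)
    then have "q ^ multiplicity q (int n) dvd m"
      using assms(2)[OF q(2)] q(1) by metis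
    then show "multiplicity q (int n) \<le> multiplicity q m"
      using multiplicity_geI[OF False] \<open>prime q\<close> not_prime_unit by blast
  qed
qed simp

theorem theorem2:
  fixes a :: "nat \<Rightarrow> int"
  assumes "strong_euler_gauss a"
  shows "gauss_sequence a"
  unfolding gauss_sequence_def
proof (intro allI impI)
  fix n :: nat
  assume "n \<ge> 1"
  then have "int n dvd (\<Sum>d | d dvd n. moebius_mu d * a (n div d))"
    by (intro int_dvd_if_prime_powers_dvd prime_power_dvd_moebius_sum[OF assms]) auto
  then show "[(\<Sum>d | d dvd n. moebius_mu d * a (n div d)) = 0] (mod int n)"
    by (simp add: cong_0_iff)
qed

end
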